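(* Let $\|\cdot\|$ be a strictly convex norm on $\mathbb{R}^n$ that is continuously differentiable on $\mathbb{R}^n\setminus\{0\}$, let $N(x)$ denote its gradient at $x\ne 0$, and set $h(x,y)=\|y\|-\langle y,N(x)\rangle$ for $x\neq0$, $y\in\mathbb{R}^n$. Suppose that there are constants $r>0$ and $\Lambda>2$ such that $$\Lambda\, h(x,x+y)\le h(x,x+2y)\quad\text{for all } x\neq 0 \text{ and } \|y\|\le r\|x\|.$$ Then $$\Big(3-\frac{2}{\Lambda}\Big)h(x,x+y)\le h(x,x+2y)\quad\text{for all } x\neq 0\text{ and }\|y\|\le 2r\|x\|.$$
   Context: $\langle\cdot,\cdot\rangle$ is the Euclidean inner product. Strict convexity of the norm means: if $x,y\neq0$ and $\|x+y\|=\|x\|+\|y\|$, then $y=\alpha x$ for some $\alpha>0$. *)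

theory Defs
  imports "HOL-Analysis.Analysis"
begin

definition is_norm :: "(real^'n \<Rightarrow> real) \<Rightarrow> bool" where
  "is_norm nrm \<longleftrightarrow>
     (\<forall>x. 0 \<le> nrm x) \<and> (\<forall>x. nrm x = 0 \<longleftrightarrow> x = 0) \<and>
     (\<forall>c x. nrm (c *\<^sub>R x) = \<bar>c\<bar> * nrm x) \<and>
     (\<forall>x y. nrm (x + y) \<le> nrm x + nrm y)"

definition strictly_convex_norm :: "(real^'n \<Rightarrow> real) \<Rightarrow> bool" where
  "strictly_convex_norm nrm \<longleftrightarrow>
     (\<forall>x y. x \<noteq> 0 \<longrightarrow> y \<noteq> 0 \<longrightarrow> nrm (x + y) = nrm x + nrm y \<longrightarrow>
        (\<exists>\<alpha>>0. y = \<alpha> *\<^sub>R x))"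

definition C1_gradient :: "(real^'n \<Rightarrow> real) \<Rightarrow> (real^'n \<Rightarrow> real^'n) \<Rightarrow> bool" where
  "C1_gradient nrm N \<longleftrightarrow>
     (\<forall>x. x \<noteq> 0 \<longrightarrow> (nrm has_derivative (\<lambda>v. v \<bullet> N x)) (at x)) \<and>
     continuous_on (- {0}) N"

definition hfun :: "(real^'n \<Rightarrow> real) \<Rightarrow> (real^'n \<Rightarrow> real^'n) \<Rightarrow> real^'n \<Rightarrow> real^'n \<Rightarrow> real" where
  "hfun nrm N x y = nrm y - y \<bullet> N x"

end

theory Submission
  imports Defs
begin

text \<open>For fixed \<open>x\<close>, \<open>h(x,\<cdot>)\<close> is a norm minus a linear functional, hence sublinear.
  Since \<open>x + y = 2/3 (x + y/2) + 1/3 (x + 2y)\<close>, this gives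
  \<open>h(x,x+y) \<le> 2/3 h(x,x+y/2) + 1/3 h(x,x+2y)\<close>, and the hypothesis applied to \<open>y/2\<close>,
  admissible when \<open>\<parallel>y\<parallel> \<le> 2r\<parallel>x\<parallel>\<close>, bounds \<open>h(x,x+y/2)\<close> by \<open>h(x,x+y)/\<Lambda>\<close>.\<close>

lemma is_norm_scaleR:
  assumes "is_norm nrm"
  shows "nrm (c *\<^sub>R v) = \<bar>c\<bar> * nrm v"
  using assms unfolding is_norm_def by blast

lemma is_norm_triangle:
  assumes "is_norm nrm"
  shows "nrm (u + v) \<le> nrm u + nrm v"
  using assms unfolding is_norm_def by blast

lemma hfun_sublinear:
  assumes "is_norm nrm" and "a \<ge> 0" and "b \<ge> 0"
  shows "hfun nrm N x (a *\<^sub>R u + b *\<^sub>R v) \<le> a * hfun nrm N x u + b * hfun nrm N x v"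
proof -
  have "nrm (a *\<^sub>R u + b *\<^sub>R v) \<le> a * nrm u + b * nrm v"
    using is_norm_triangle[OF assms(1)] is_norm_scaleR[OF assms(1)] assms(2,3)
    by (metis abs_of_nonneg)
  moreover have "(a *\<^sub>R u + b *\<^sub>R v) \<bullet> N x = a * (u \<bullet> N x) + b * (v \<bullet> N x)"
    by (simp add: inner_add_left)
  ultimately show ?thesis
    unfolding hfun_def by (simp add: algebra_simps)
qed

theorem lemma4p4:
  fixes nrm :: "real^'n \<Rightarrow> real" and N :: "real^'n \<Rightarrow> real^'n"
    and r \<Lambda> :: real
  assumes "is_norm nrm"
    and "strictly_convex_norm nrm"
    and "C1_gradient nrm N"
    and "r > 0" and "\<Lambda> > 2"
    and "\<forall>x y. x \<noteq> 0 \<longrightarrow> nrm y \<le> r * nrm x \<longrightarrow>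
           \<Lambda> * hfun nrm N x (x + y) \<le> hfun nrm N x (x + 2 *\<^sub>R y)"
  shows "\<forall>x y. x \<noteq> 0 \<longrightarrow> nrm y \<le> 2 * r * nrm x \<longrightarrow>
           (3 - 2 / \<Lambda>) * hfun nrm N x (x + y) \<le> hfun nrm N x (x + 2 *\<^sub>R y)"
proof (intro allI impI)
  fix x y :: "real^'n"
  assume "x \<noteq> 0" and "nrm y \<le> 2 * r * nrm x"
  let ?h = "hfun nrm N x" and ?z = "(1/2) *\<^sub>R y"
  have "nrm ?z \<le> r * nrm x"
    using \<open>nrm y \<le> 2 * r * nrm x\<close> is_norm_scaleR[OF assms(1), of "1/2" y] by simp
  moreover have "2 *\<^sub>R ?z = y"
    by simp
  ultimately have "\<Lambda> * ?h (x + ?z) \<le> ?h (x + y)"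
    using assms(6) \<open>x \<noteq> 0\<close> by metis
  then have half: "?h (x + ?z) \<le> ?h (x + y) / \<Lambda>"
    using assms(5) by (simp add: field_simps mult.commute)
  have "x + y = (2/3) *\<^sub>R (x + ?z) + (1/3) *\<^sub>R (x + 2 *\<^sub>R y)"
    by (simp add: vec_eq_iff field_simps)
  then have "?h (x + y) \<le> (2/3) * ?h (x + ?z) + (1/3) * ?h (x + 2 *\<^sub>R y)"
    using hfun_sublinear[OF assms(1), of "2/3" "1/3" N x] by simp
  with half show "(3 - 2 / \<Lambda>) * ?h (x + y) \<le> ?h (x + 2 *\<^sub>R y)"
    by (simp add: algebra_simps)
qed

end
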